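(* Let $T$ be a tree on $t$ vertices. Then for every positive integer $n$, $\mathrm{ex}^*(n,T,2)\leq 2tn$; that is, every $n$-vertex graph containing no copy of $C_4=K_{2,2}$ as a subgraph and no induced copy of $T$ has at most $2tn$ edges.
   Context: For a graph $H$ and integers $n,s\geq 1$, $\mathrm{ex}^*(n,H,s)$ denotes the maximum number of edges in an $n$-vertex graph which contains no copy of $K_{s,s}$ as a (not necessarily induced) subgraph and contains no induced copy of $H$. *)

theory Defs
  imports Main
begin

text \<open>A finite simple graph: finite vertex set V and a symmetric, irreflexive
  adjacency relation E (only its restriction to V matters).\<close>
definition sgraph :: "'a set \<Rightarrow> ('a \<Rightarrow> 'a \<Rightarrow> bool) \<Rightarrow> bool" where
  "sgraph V E \<longleftrightarrow> finite V \<and> (\<forall>u\<in>V. \<forall>v\<in>V. E u v \<longrightarrow> E v u) \<and> (\<forall>v\<in>V. \<not> E v v)"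

definition edges :: "'a set \<Rightarrow> ('a \<Rightarrow> 'a \<Rightarrow> bool) \<Rightarrow> 'a set set" where
  "edges V E = {{u, v} | u v. u \<in> V \<and> v \<in> V \<and> E u v}"

definition connected_graph :: "'a set \<Rightarrow> ('a \<Rightarrow> 'a \<Rightarrow> bool) \<Rightarrow> bool" where
  "connected_graph V E \<longleftrightarrow>
     (\<forall>u\<in>V. \<forall>v\<in>V. (\<lambda>x y. x \<in> V \<and> y \<in> V \<and> E x y)\<^sup>*\<^sup>* u v)"

definition is_cycle :: "'a set \<Rightarrow> ('a \<Rightarrow> 'a \<Rightarrow> bool) \<Rightarrow> 'a list \<Rightarrow> bool" where
  "is_cycle V E cs \<longleftrightarrow> length cs \<ge> 3 \<and> distinct cs \<and> set cs \<subseteq> V \<and>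
     (\<forall>i. Suc i < length cs \<longrightarrow> E (cs ! i) (cs ! Suc i)) \<and> E (last cs) (hd cs)"

definition acyclic_graph :: "'a set \<Rightarrow> ('a \<Rightarrow> 'a \<Rightarrow> bool) \<Rightarrow> bool" where
  "acyclic_graph V E \<longleftrightarrow> (\<nexists>cs. is_cycle V E cs)"

definition is_tree :: "'a set \<Rightarrow> ('a \<Rightarrow> 'a \<Rightarrow> bool) \<Rightarrow> bool" where
  "is_tree V E \<longleftrightarrow> sgraph V E \<and> V \<noteq> {} \<and> connected_graph V E \<and> acyclic_graph V E"

definition has_induced_copy ::
  "'a set \<Rightarrow> ('a \<Rightarrow> 'a \<Rightarrow> bool) \<Rightarrow> 'b set \<Rightarrow> ('b \<Rightarrow> 'b \<Rightarrow> bool) \<Rightarrow> bool" where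
  "has_induced_copy V E VH EH \<longleftrightarrow>
     (\<exists>f. inj_on f VH \<and> f ` VH \<subseteq> V \<and>
          (\<forall>u\<in>VH. \<forall>v\<in>VH. EH u v \<longleftrightarrow> E (f u) (f v)))"

definition has_Kss :: "'a set \<Rightarrow> ('a \<Rightarrow> 'a \<Rightarrow> bool) \<Rightarrow> nat \<Rightarrow> bool" where
  "has_Kss V E s \<longleftrightarrow>
     (\<exists>A B. A \<subseteq> V \<and> B \<subseteq> V \<and> A \<inter> B = {} \<and> card A = s \<and> card B = s \<and>
            (\<forall>a\<in>A. \<forall>b\<in>B. E a b))"

end

theory Submission
  imports Defs "HOL-Library.Transitive_Closure_Table"
begin

(* Degeneracy: if some vertex of G has at most 2t neighbours, delete it and induct.
   Otherwise every vertex has more than 2t neighbours and T embeds as an induced subgraph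
   greedily, one vertex at a time along a connected subtree S. The new tree vertex x has a
   unique neighbour u in S, so its image must be a neighbour of f u outside f(S) that is
   not adjacent to any other f b. As G has no C4, f u shares at most one neighbour with
   each f b, so fewer than 2|S| < 2t neighbours of f u are excluded. *)

lemma sgraph_finite: "sgraph V E \<Longrightarrow> finite V"
  by (simp add: sgraph_def)

lemma sgraph_sym: "sgraph V E \<Longrightarrow> u \<in> V \<Longrightarrow> v \<in> V \<Longrightarrow> E u v \<longleftrightarrow> E v u"
  by (auto simp: sgraph_def)

lemma sgraph_irrefl: "sgraph V E \<Longrightarrow> v \<in> V \<Longrightarrow> \<not> E v v"
  by (simp add: sgraph_def)

definition induced_embedding ::
  "'b set \<Rightarrow> ('b \<Rightarrow> 'b \<Rightarrow> bool) \<Rightarrow> 'a set \<Rightarrow> ('a \<Rightarrow> 'a \<Rightarrow> bool) \<Rightarrow> ('b \<Rightarrow> 'a) \<Rightarrow> bool" where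
  "induced_embedding VH EH W E f \<longleftrightarrow>
     inj_on f VH \<and> f ` VH \<subseteq> W \<and> (\<forall>u\<in>VH. \<forall>v\<in>VH. EH u v \<longleftrightarrow> E (f u) (f v))"

lemma has_induced_copy_iff_induced_embedding:
  "has_induced_copy V E VH EH \<longleftrightarrow> (\<exists>f. induced_embedding VH EH V E f)"
  by (simp add: has_induced_copy_def induced_embedding_def)

lemma induced_embedding_mono:
  "induced_embedding VH EH W E f \<Longrightarrow> W \<subseteq> V \<Longrightarrow> induced_embedding VH EH V E f"
  by (auto simp: induced_embedding_def)

lemma induced_embedding_singleton:
  "\<not> EH x x \<Longrightarrow> \<not> E y y \<Longrightarrow> y \<in> W \<Longrightarrow> induced_embedding {x} EH W E (\<lambda>_. y)"
  by (simp add: induced_embedding_def)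

lemma induced_embedding_insert:
  assumes H: "sgraph VH EH" "insert x S \<subseteq> VH" and G: "sgraph V E" "W \<subseteq> V"
    and f: "induced_embedding S EH W E f" and "x \<notin> S" "y \<in> W" "y \<notin> f ` S"
    and x_edges: "\<forall>b\<in>S. EH x b \<longleftrightarrow> E y (f b)"
  shows "induced_embedding (insert x S) EH W E (f(x := y))"
proof -
  have fS: "f ` S \<subseteq> W" using f by (simp add: induced_embedding_def)
  have "EH b x \<longleftrightarrow> E (f b) y" if "b \<in> S" for b
  proof -
    have "b \<in> VH" "x \<in> VH" "f b \<in> V" "y \<in> V" using that H(2) G(2) fS \<open>y \<in> W\<close> by auto
    then show ?thesis
      using x_edges that sgraph_sym[OF H(1), of b x] sgraph_sym[OF G(1), of "f b" y] by simp
  qed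
  moreover have "\<not> EH x x" "\<not> E y y"
    using sgraph_irrefl[OF H(1)] sgraph_irrefl[OF G(1)] H(2) G(2) \<open>y \<in> W\<close> by auto
  moreover have "f(x := y) ` S = f ` S" using \<open>x \<notin> S\<close> by (auto simp: image_iff)
  ultimately show ?thesis
    using assms unfolding induced_embedding_def by (auto simp: inj_on_def)
qed

lemma rtranclp_leaves_set:
  assumes "R\<^sup>*\<^sup>* a b" "a \<in> S" "b \<notin> S"
  shows "\<exists>p q. p \<in> S \<and> q \<notin> S \<and> R p q"
  using assms by (induction rule: rtranclp_induct) blast+

lemma connected_graph_insert:
  assumes S: "connected_graph S E" and "u \<in> S" "E u x" "E x u"
  shows "connected_graph (insert x S) E"
proof -
  let ?R = "\<lambda>p q. p \<in> S \<and> q \<in> S \<and> E p q"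
  let ?R' = "\<lambda>p q. p \<in> insert x S \<and> q \<in> insert x S \<and> E p q"
  have "?R\<^sup>*\<^sup>* \<le> ?R'\<^sup>*\<^sup>*" by (rule rtranclp_mono) auto
  then have in_S: "?R'\<^sup>*\<^sup>* a b" if "a \<in> S" "b \<in> S" for a b
    using S that unfolding connected_graph_def by blast
  have "?R' x u" "?R' u x" using assms by auto
  then have "?R'\<^sup>*\<^sup>* a u \<and> ?R'\<^sup>*\<^sup>* u a" if "a \<in> insert x S" for a
    using that in_S \<open>u \<in> S\<close> by (cases "a = x") auto
  then show ?thesis
    unfolding connected_graph_def by (meson rtranclp_trans)
qed

text \<open>Two neighbours of x in a connected S, joined by a path inside S, would close a cycle through x.\<close>

lemma acyclic_unique_neighbour:
  assumes E: "sgraph V E" "acyclic_graph V E"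
    and S: "S \<subseteq> V" "connected_graph S E" and x: "x \<in> V" "x \<notin> S"
    and "u \<in> S" "w \<in> S" "E x u" "E x w"
  shows "u = w"
proof (rule ccontr)
  assume "u \<noteq> w"
  let ?R = "\<lambda>p q. p \<in> S \<and> q \<in> S \<and> E p q"
  have "?R\<^sup>*\<^sup>* u w" using S \<open>u \<in> S\<close> \<open>w \<in> S\<close> unfolding connected_graph_def by blast
  then obtain ys0 where "rtrancl_path ?R u ys0 w" by (auto simp: rtranclp_eq_rtrancl_path)
  then obtain ys where path: "rtrancl_path ?R u ys w" and distinct: "distinct (u # ys)"
    by (rule rtrancl_path_distinct)
  have ys_S: "set ys \<subseteq> S" using rtrancl_path_Range[OF path] by blast
  have "ys \<noteq> []" using path \<open>u \<noteq> w\<close> by (auto elim: rtrancl_path.cases)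
  define cs where "cs = x # u # ys"
  have "is_cycle V E cs"
    unfolding is_cycle_def
  proof (intro conjI allI impI)
    show "3 \<le> length cs" using \<open>ys \<noteq> []\<close> by (cases ys) (auto simp: cs_def)
    show "distinct cs" "set cs \<subseteq> V"
      using distinct ys_S S x \<open>u \<in> S\<close> by (auto simp: cs_def)
    show "E (cs ! i) (cs ! Suc i)" if "Suc i < length cs" for i
    proof (cases i)
      case (Suc j)
      then show ?thesis
        using rtrancl_path_nth[OF path, of j] that by (simp add: cs_def)
    qed (simp add: cs_def \<open>E x u\<close>)
    have "E w x" using sgraph_sym[OF E(1), of x w] S x \<open>w \<in> S\<close> \<open>E x w\<close> by auto
    then show "E (last cs) (hd cs)"
      using rtrancl_path_last[OF path \<open>ys \<noteq> []\<close>] \<open>ys \<noteq> []\<close> by (simp add: cs_def)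
  qed
  then show False using E(2) unfolding acyclic_graph_def by blast
qed

lemma tree_subtree_extension:
  assumes T: "is_tree V E" and S: "S \<subseteq> V" "S \<noteq> {}" "S \<noteq> V" "connected_graph S E"
  obtains u x where "u \<in> S" "x \<in> V" "x \<notin> S" "E u x" "E x u" "\<forall>b\<in>S. E x b \<longrightarrow> b = u"
proof -
  obtain s z where "s \<in> S" "z \<in> V" "z \<notin> S" using S by blast
  then have "(\<lambda>p q. p \<in> V \<and> q \<in> V \<and> E p q)\<^sup>*\<^sup>* s z"
    using T S unfolding is_tree_def connected_graph_def by blast
  then obtain u x where ux: "u \<in> S" "x \<in> V" "x \<notin> S" "E u x"
    using rtranclp_leaves_set[of _ s z S] \<open>s \<in> S\<close> \<open>z \<notin> S\<close> by blast
  have "E x u" using T S ux sgraph_sym[of V E u x] unfolding is_tree_def by auto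
  moreover have "\<forall>b\<in>S. E x b \<longrightarrow> b = u"
    using T S ux \<open>E x u\<close> acyclic_unique_neighbour unfolding is_tree_def by metis
  ultimately show thesis using that ux by blast
qed

lemma C4_free_common_neighbours:
  assumes G: "sgraph V E" "\<not> has_Kss V E 2" and "a \<in> V" "b \<in> V" "a \<noteq> b"
  shows "card {y\<in>V. E a y \<and> E b y} \<le> 1"
proof (rule ccontr)
  let ?C = "{y\<in>V. E a y \<and> E b y}"
  assume "\<not> card ?C \<le> 1"
  then obtain y1 y2 where y: "y1 \<in> ?C" "y2 \<in> ?C" "y1 \<noteq> y2"
    using card_le_Suc0_iff_eq[of ?C] sgraph_finite[OF G(1)] by auto
  have "\<not> E v v" if "v \<in> V" for v using sgraph_irrefl[OF G(1) that] .
  then have "has_Kss V E 2"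
    unfolding has_Kss_def using y assms by (intro exI[of _ "{a, b}"] exI[of _ "{y1, y2}"]) auto
  with G(2) show False by simp
qed

lemma C4_free_private_neighbour:
  assumes G: "sgraph V E" "\<not> has_Kss V E 2" and "A \<subseteq> V" "v \<in> A" "W \<subseteq> V"
    and deg: "2 * card A \<le> card {y\<in>W. E v y}"
  obtains y where "y \<in> W" "E v y" "y \<notin> A" "\<forall>a\<in>A - {v}. \<not> E a y"
proof -
  have fin: "finite V" using sgraph_finite[OF G(1)] .
  then have finA: "finite A" using \<open>A \<subseteq> V\<close> finite_subset by blast
  define Common where "Common = (\<Union>a\<in>A - {v}. {y\<in>V. E v y \<and> E a y})"
  have "card Common \<le> (\<Sum>a\<in>A - {v}. card {y\<in>V. E v y \<and> E a y})"
    unfolding Common_def using finA by (intro card_UN_le) simp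
  also have "\<dots> \<le> (\<Sum>a\<in>A - {v}. 1)"
    using C4_free_common_neighbours[OF G] assms by (intro sum_mono) auto
  also have "\<dots> < card A" using card_Diff1_less[OF finA \<open>v \<in> A\<close>] by simp
  finally have "card (A \<union> Common) < card {y\<in>W. E v y}"
    using deg card_Un_le[of A Common] by linarith
  moreover have "finite (A \<union> Common)" using finA fin by (simp add: Common_def)
  ultimately have "\<not> {y\<in>W. E v y} \<subseteq> A \<union> Common" by (meson card_mono leD)
  then obtain y where y: "y \<in> W" "E v y" "y \<notin> A" "y \<notin> Common" by blast
  moreover have "\<not> E a y" if "a \<in> A - {v}" for a
    using that y \<open>A \<subseteq> V\<close> \<open>W \<subseteq> V\<close> unfolding Common_def by blast
  ultimately show thesis using that by blast
qed

lemma induced_subtree_embedding_extend: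
  assumes T: "is_tree VT ET" and G: "sgraph V E" "\<not> has_Kss V E 2" and "W \<subseteq> V"
    and deg: "\<forall>v\<in>W. 2 * card VT \<le> card {y\<in>W. E v y}"
    and S: "S \<subseteq> VT" "S \<noteq> {}" "S \<noteq> VT" "connected_graph S ET"
    and f: "induced_embedding S ET W E f"
  obtains x y where "x \<in> VT" "x \<notin> S" "connected_graph (insert x S) ET"
    "induced_embedding (insert x S) ET W E (f(x := y))"
proof -
  have sgT: "sgraph VT ET" using T unfolding is_tree_def by simp
  obtain u x where ux: "u \<in> S" "x \<in> VT" "x \<notin> S" "ET u x" "ET x u"
    and unique: "\<forall>b\<in>S. ET x b \<longrightarrow> b = u"
    using tree_subtree_extension[OF T S] by blast
  have inj: "inj_on f S" and fS: "f ` S \<subseteq> W"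
    using f unfolding induced_embedding_def by auto
  have "card (f ` S) \<le> card S"
    using card_image_le finite_subset[OF S(1) sgraph_finite[OF sgT]] by blast
  also have "\<dots> \<le> card VT" using S(1) sgraph_finite[OF sgT] by (simp add: card_mono)
  finally have "2 * card (f ` S) \<le> card {y\<in>W. E (f u) y}"
    using deg fS ux(1) by force
  then obtain y where y: "y \<in> W" "E (f u) y" "y \<notin> f ` S"
    and avoids: "\<forall>a\<in>f ` S - {f u}. \<not> E a y"
    using C4_free_private_neighbour[OF G _ _ \<open>W \<subseteq> V\<close>] fS \<open>W \<subseteq> V\<close> ux(1) by blast
  have x_edges: "ET x b \<longleftrightarrow> E y (f b)" if "b \<in> S" for b
  proof -
    have sym: "E (f b) y \<longleftrightarrow> E y (f b)"
      using sgraph_sym[OF G(1), of "f b" y] that fS y(1) \<open>W \<subseteq> V\<close> by auto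
    show ?thesis
    proof (cases "b = u")
      case True
      then show ?thesis using ux(5) y(2) sym by simp
    next
      case False
      then have "f b \<in> f ` S - {f u}" using that ux(1) inj by (auto dest: inj_onD)
      then show ?thesis using avoids unique that False sym by auto
    qed
  qed
  have "induced_embedding (insert x S) ET W E (f(x := y))"
    using induced_embedding_insert[OF sgT _ G(1) \<open>W \<subseteq> V\<close> f ux(3) y(1,3)] x_edges S(1) ux(2)
    by blast
  then show thesis
    using that ux(2,3) connected_graph_insert[OF S(4) ux(1,4,5)] by blast
qed

lemma induced_tree_if_min_degree:
  assumes T: "is_tree VT ET" and G: "sgraph V E" "\<not> has_Kss V E 2"
    and W: "W \<subseteq> V" "W \<noteq> {}" and deg: "\<forall>v\<in>W. 2 * card VT \<le> card {y\<in>W. E v y}"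
  shows "\<exists>f. induced_embedding VT ET W E f"
proof -
  have sgT: "sgraph VT ET" using T unfolding is_tree_def by simp
  have "\<exists>S f. S \<subseteq> VT \<and> card S = k \<and> connected_graph S ET \<and> induced_embedding S ET W E f"
    if "k \<le> card VT" for k
    using that
  proof (induction k)
    case 0
    have "connected_graph {} ET" "induced_embedding {} ET W E f" for f
      by (simp_all add: connected_graph_def induced_embedding_def)
    then show ?case by (metis card.empty empty_subsetI)
  next
    case (Suc k)
    then obtain S f where S: "S \<subseteq> VT" "card S = k" "connected_graph S ET"
      and f: "induced_embedding S ET W E f" by (meson Suc_leD)
    have "S \<noteq> VT" using S(2) Suc.prems by auto
    show ?case
    proof (cases "S = {}")
      case True
      obtain z w where z: "z \<in> VT" and w: "w \<in> W" using \<open>S \<noteq> VT\<close> True W(2) by blast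
      have "connected_graph {z} ET" by (simp add: connected_graph_def)
      moreover have "induced_embedding {z} ET W E (\<lambda>_. w)"
        using sgraph_irrefl[OF sgT z] sgraph_irrefl[OF G(1)] w W(1)
        by (auto intro: induced_embedding_singleton)
      ultimately show ?thesis using True S(2) z by (intro exI[of _ "{z}"]) auto
    next
      case False
      obtain x y where "x \<in> VT" "x \<notin> S" "connected_graph (insert x S) ET"
        "induced_embedding (insert x S) ET W E (f(x := y))"
        by (rule induced_subtree_embedding_extend[OF T G W(1) deg S(1) False \<open>S \<noteq> VT\<close> S(3) f])
      moreover have "insert x S \<subseteq> VT" using S(1) \<open>x \<in> VT\<close> by blast
      moreover have "card (insert x S) = Suc k"
        using S(1,2) \<open>x \<notin> S\<close> finite_subset[OF S(1) sgraph_finite[OF sgT]] by simp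
      ultimately show ?thesis by blast
    qed
  qed
  then obtain S f where "S \<subseteq> VT" "card S = card VT" "induced_embedding S ET W E f" by blast
  moreover from this have "S = VT" using card_subset_eq[OF sgraph_finite[OF sgT]] by blast
  ultimately show ?thesis by blast
qed

lemma finite_edges:
  assumes "finite W"
  shows "finite (edges W E)"
proof -
  have "edges W E \<subseteq> (\<lambda>(u, v). {u, v}) ` (W \<times> W)" unfolding edges_def by auto
  then show ?thesis using assms finite_subset by blast
qed

lemma edges_remove_vertex:
  assumes "sgraph V E" "W \<subseteq> V"
  shows "edges W E \<subseteq> edges (W - {v}) E \<union> (\<lambda>y. {v, y}) ` {y\<in>W. E v y}"
proof
  fix e assume "e \<in> edges W E"
  then obtain a b where e: "e = {a, b}" "a \<in> W" "b \<in> W" "E a b" unfolding edges_def by blast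
  then have "E b a" using sgraph_sym[OF assms(1), of a b] assms(2) by auto
  then show "e \<in> edges (W - {v}) E \<union> (\<lambda>y. {v, y}) ` {y\<in>W. E v y}"
    using e unfolding edges_def by (auto simp: insert_commute)
qed

lemma card_edges_degenerate_le:
  assumes G: "sgraph V E" and "W \<subseteq> V"
    and degenerate: "\<And>U. U \<subseteq> W \<Longrightarrow> U \<noteq> {} \<Longrightarrow> \<exists>v\<in>U. card {y\<in>U. E v y} \<le> d"
  shows "card (edges W E) \<le> d * card W"
proof -
  have "finite W" using sgraph_finite[OF G] \<open>W \<subseteq> V\<close> finite_subset by blast
  then show ?thesis
    using \<open>W \<subseteq> V\<close> degenerate
  proof (induction W rule: finite_psubset_induct)
    case (psubset W)
    show ?case
    proof (cases "W = {}")
      case True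
      then show ?thesis by (simp add: edges_def)
    next
      case False
      then obtain v where v: "v \<in> W" "card {y\<in>W. E v y} \<le> d" using psubset.prems by blast
      let ?N = "(\<lambda>y. {v, y}) ` {y\<in>W. E v y}"
      have "finite (edges (W - {v}) E \<union> ?N)"
        using psubset.hyps(1) by (simp add: finite_edges)
      then have "card (edges W E) \<le> card (edges (W - {v}) E \<union> ?N)"
        using edges_remove_vertex[OF G psubset.prems(1)] by (rule card_mono)
      also have "\<dots> \<le> card (edges (W - {v}) E) + card ?N" by (rule card_Un_le)
      also have "\<dots> \<le> d * card (W - {v}) + d"
      proof (rule add_mono)
        show "card (edges (W - {v}) E) \<le> d * card (W - {v})"
          by (rule psubset.IH) (use v psubset.prems in blast)+
        show "card ?N \<le> d"
          using card_image_le[of "{y\<in>W. E v y}"] psubset.hyps(1) v(2) le_trans by fastforce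
      qed
      also have "\<dots> = d * card W"
        using card.remove[OF psubset.hyps(1) v(1)] by simp
      finally show ?thesis .
    qed
  qed
qed

theorem proposition3p2:
  fixes VT :: "'b set" and ET :: "'b \<Rightarrow> 'b \<Rightarrow> bool"
    and V :: "'a set" and E :: "'a \<Rightarrow> 'a \<Rightarrow> bool"
    and t n :: nat
  assumes "is_tree VT ET" and "card VT = t"
    and "sgraph V E" and "card V = n" and "n \<ge> 1"
    and "\<not> has_Kss V E 2"
    and "\<not> has_induced_copy V E VT ET"
  shows "card (edges V E) \<le> 2 * t * n"
proof -
  have "card (edges V E) \<le> 2 * t * card V"
  proof (rule card_edges_degenerate_le[OF \<open>sgraph V E\<close> order_refl])
    fix U assume "U \<subseteq> V" "U \<noteq> {}"
    show "\<exists>v\<in>U. card {y\<in>U. E v y} \<le> 2 * t"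
    proof (rule ccontr)
      assume "\<not> ?thesis"
      then have "\<forall>v\<in>U. 2 * card VT \<le> card {y\<in>U. E v y}" using \<open>card VT = t\<close> by auto
      then obtain f where "induced_embedding VT ET U E f"
        using induced_tree_if_min_degree[OF assms(1,3,6) \<open>U \<subseteq> V\<close> \<open>U \<noteq> {}\<close>] by blast
      then have "induced_embedding VT ET V E f"
        using induced_embedding_mono \<open>U \<subseteq> V\<close> by blast
      then show False
        using assms(7) by (auto simp: has_induced_copy_iff_induced_embedding)
    qed
  qed
  then show ?thesis using \<open>card V = n\<close> by simp
qed

end
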